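(* Let $L$ be a finite semimodular lattice with exactly two coatoms and $U$ a finite semimodular lattice with exactly two atoms. Then any vertical 2-sum $L +_2 U$ is a semimodular lattice.
   Context: Semimodular means upper semimodular: whenever $s,t \succ s \wedge t$ (covering relations), then $s,t \prec s \vee t$. Let $L' = L \setminus \{\top_L\}$ and $U' = U \setminus \{\bot_U\}$. A vertical 2-sum $L +_2 U$ is the poset obtained from the disjoint union of $L'$ and $U'$ by identifying the two coatoms of $L$ with the two atoms of $U$ via some bijection; $x \le y$ iff $x,y \in L'$ and $x \le_L y$, or $x,y \in U'$ and $x \le_U y$, or $x \in L'$, $y \in U'$ and there is an identified element $c$ with $x \le_L c$ and $c \le_U y$. (This poset is a lattice.) *)

theory Defs
  imports Main
begin

definition covers_on :: "'a set \<Rightarrow> ('a \<Rightarrow> 'a \<Rightarrow> bool) \<Rightarrow> 'a \<Rightarrow> 'a \<Rightarrow> bool" where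
  "covers_on A le x y \<longleftrightarrow> x \<in> A \<and> y \<in> A \<and> le x y \<and> x \<noteq> y \<and>
     \<not> (\<exists>z\<in>A. le x z \<and> le z y \<and> z \<noteq> x \<and> z \<noteq> y)"

definition is_sup_on :: "'a set \<Rightarrow> ('a \<Rightarrow> 'a \<Rightarrow> bool) \<Rightarrow> 'a \<Rightarrow> 'a \<Rightarrow> 'a \<Rightarrow> bool" where
  "is_sup_on A le x y j \<longleftrightarrow> j \<in> A \<and> le x j \<and> le y j \<and>
     (\<forall>z\<in>A. le x z \<and> le y z \<longrightarrow> le j z)"

definition is_inf_on :: "'a set \<Rightarrow> ('a \<Rightarrow> 'a \<Rightarrow> bool) \<Rightarrow> 'a \<Rightarrow> 'a \<Rightarrow> 'a \<Rightarrow> bool" where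
  "is_inf_on A le x y m \<longleftrightarrow> m \<in> A \<and> le m x \<and> le m y \<and>
     (\<forall>z\<in>A. le z x \<and> le z y \<longrightarrow> le z m)"

definition partial_order_on' :: "'a set \<Rightarrow> ('a \<Rightarrow> 'a \<Rightarrow> bool) \<Rightarrow> bool" where
  "partial_order_on' A le \<longleftrightarrow>
     (\<forall>x\<in>A. le x x) \<and>
     (\<forall>x\<in>A. \<forall>y\<in>A. le x y \<and> le y x \<longrightarrow> x = y) \<and>
     (\<forall>x\<in>A. \<forall>y\<in>A. \<forall>z\<in>A. le x y \<and> le y z \<longrightarrow> le x z)"

definition lattice_on :: "'a set \<Rightarrow> ('a \<Rightarrow> 'a \<Rightarrow> bool) \<Rightarrow> bool" where
  "lattice_on A le \<longleftrightarrow> partial_order_on' A le \<and>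
     (\<forall>x\<in>A. \<forall>y\<in>A. (\<exists>j. is_sup_on A le x y j) \<and> (\<exists>m. is_inf_on A le x y m))"

definition semimodular_on :: "'a set \<Rightarrow> ('a \<Rightarrow> 'a \<Rightarrow> bool) \<Rightarrow> bool" where
  "semimodular_on A le \<longleftrightarrow>
     (\<forall>s\<in>A. \<forall>t\<in>A. \<forall>m j. is_inf_on A le s t m \<and> is_sup_on A le s t j \<and>
        covers_on A le m s \<and> covers_on A le m t \<longrightarrow>
        covers_on A le s j \<and> covers_on A le t j)"

definition semimodular :: "('a::lattice) itself \<Rightarrow> bool" where
  "semimodular _ \<longleftrightarrow> semimodular_on (UNIV :: 'a set) (\<le>)"

definition coatoms :: "'a::bounded_lattice set" where
  "coatoms = {c. covers_on UNIV (\<le>) c top}"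

definition atoms :: "'a::bounded_lattice set" where
  "atoms = {a. covers_on UNIV (\<le>) bot a}"

text \<open>Elements of L +_2 U are represented in the sum type: \<open>Inl x\<close> for
  \<open>x \<in> L' = L - {top}\<close> (the coatoms c of L stand for the identified
  elements c = f c), and \<open>Inr u\<close> for \<open>u \<in> U' = U - {bot}\<close> that is not an atom.
  \<open>vs_L\<close>/\<open>vs_U\<close> give the element viewed in L' resp. U' (if it belongs there).\<close>

definition vs2_carrier :: "('a::bounded_lattice \<Rightarrow> 'b::bounded_lattice) \<Rightarrow> ('a + 'b) set" where
  "vs2_carrier f = Inl ` (UNIV - {top}) \<union> Inr ` (UNIV - {bot} - atoms)"

definition vs_L :: "('a::bounded_lattice \<Rightarrow> 'b::bounded_lattice) \<Rightarrow> 'a + 'b \<Rightarrow> 'a option" where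
  "vs_L f p = (case p of Inl x \<Rightarrow> Some x | Inr u \<Rightarrow> None)"

definition vs_U :: "('a::bounded_lattice \<Rightarrow> 'b::bounded_lattice) \<Rightarrow> 'a + 'b \<Rightarrow> 'b option" where
  "vs_U f p = (case p of Inl x \<Rightarrow> (if x \<in> coatoms then Some (f x) else None)
                        | Inr u \<Rightarrow> Some u)"

definition vs2_le :: "('a::bounded_lattice \<Rightarrow> 'b::bounded_lattice) \<Rightarrow> 'a + 'b \<Rightarrow> 'a + 'b \<Rightarrow> bool" where
  "vs2_le f p q \<longleftrightarrow>
     (\<exists>x y. vs_L f p = Some x \<and> vs_L f q = Some y \<and> x \<le> y) \<or>
     (\<exists>u v. vs_U f p = Some u \<and> vs_U f q = Some v \<and> u \<le> v) \<or>
     (\<exists>x v. vs_L f p = Some x \<and> vs_U f q = Some v \<and>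
        (\<exists>c\<in>coatoms. x \<le> c \<and> f c \<le> v))"

end

theory Submission
  imports Defs
begin

text \<open>
  In \<open>L +\<^sub>2 U\<close> the set \<open>L - {\<top>}\<close> sits as a down-set and \<open>U - {\<bottom>}\<close> as an up-set, the two
  overlapping exactly in the identified coatoms and atoms. Hence every covering pair lies in one
  of the two pieces. If \<open>m\<close> is covered by \<open>s \<noteq> t\<close> and lies in the upper piece, semimodularity
  of \<open>U\<close> applies directly. Otherwise \<open>m\<close> is a non-coatom of \<open>L\<close>, so \<open>s, t\<close> cover \<open>m\<close> in \<open>L\<close>;
  either \<open>s \<squnion> t < \<top>\<close> and semimodularity of \<open>L\<close> applies, or \<open>s, t\<close> are the two coatoms,
  whose join in the sum is the join of the two atoms of \<open>U\<close>, and semimodularity of \<open>U\<close> at \<open>\<bottom>\<close>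
  finishes. That the sum is a lattice follows from finiteness, a bottom element and binary joins,
  which are computed case by case using that \<open>L\<close> has exactly two coatoms.
\<close>

lemma is_sup_on_unique:
  "partial_order_on' A le \<Longrightarrow> is_sup_on A le x y j \<Longrightarrow> is_sup_on A le x y j' \<Longrightarrow> j = j'"
  unfolding partial_order_on'_def is_sup_on_def by blast

lemma is_sup_on_commute: "is_sup_on A le x y j \<longleftrightarrow> is_sup_on A le y x j"
  unfolding is_sup_on_def by blast

lemma covers_on_embedding_iff:
  assumes "g ` B \<subseteq> A" "inj_on g B" "\<forall>a\<in>B. \<forall>b\<in>B. le' (g a) (g b) \<longleftrightarrow> le a b"
    and "x \<in> B" "y \<in> B" "\<forall>z\<in>A. le' (g x) z \<and> le' z (g y) \<longrightarrow> z \<in> g ` B"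
  shows "covers_on A le' (g x) (g y) \<longleftrightarrow> covers_on B le x y"
  using assms unfolding covers_on_def inj_on_def by (smt (verit) image_iff image_subset_iff)

lemma covers_on_subset_iff:
  assumes "B \<subseteq> A" "x \<in> B" "y \<in> B" "\<forall>z\<in>A. le x z \<and> le z y \<longrightarrow> z \<in> B"
  shows "covers_on A le x y \<longleftrightarrow> covers_on B le x y"
  using covers_on_embedding_iff[of id B A le le x y] assms by simp

lemma covers_onD:
  "covers_on A le x y \<Longrightarrow> z \<in> A \<Longrightarrow> le x z \<Longrightarrow> le z y \<Longrightarrow> z = x \<or> z = y"
  unfolding covers_on_def by blast

lemma is_sup_on_upset_embedding:
  assumes "g ` B \<subseteq> A" "\<forall>a\<in>B. \<forall>b\<in>B. le' (g a) (g b) \<longleftrightarrow> le a b"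
    and "\<forall>b\<in>B. \<forall>z\<in>A. le' (g b) z \<longrightarrow> z \<in> g ` B"
    and "x \<in> B" "y \<in> B" "is_sup_on B le x y j"
  shows "is_sup_on A le' (g x) (g y) (g j)"
  using assms unfolding is_sup_on_def by (smt (verit) image_iff image_subset_iff)

lemma finite_poset_ex_lub:
  assumes po: "partial_order_on' A le" and sups: "\<forall>x\<in>A. \<forall>y\<in>A. \<exists>j. is_sup_on A le x y j"
    and "finite S" "S \<noteq> {}" "S \<subseteq> A"
  shows "\<exists>j\<in>A. (\<forall>s\<in>S. le s j) \<and> (\<forall>z\<in>A. (\<forall>s\<in>S. le s z) \<longrightarrow> le j z)"
  using assms(3-5)
proof (induction S rule: finite_ne_induct)
  case (singleton x)
  then show ?case
    using po unfolding partial_order_on'_def by blast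
next
  case (insert x F)
  then obtain k where k: "k \<in> A" "\<forall>s\<in>F. le s k" "\<forall>z\<in>A. (\<forall>s\<in>F. le s z) \<longrightarrow> le k z"
    by auto
  obtain j where j: "j \<in> A" "le x j" "le k j" "\<forall>z\<in>A. le x z \<and> le k z \<longrightarrow> le j z"
    using sups insert.prems k(1) unfolding is_sup_on_def by blast
  have trans: "le a c" if "a \<in> A" "b \<in> A" "c \<in> A" "le a b" "le b c" for a b c
    using po that unfolding partial_order_on'_def by blast
  have "le s j" if "s \<in> F" for s
    using trans[of s k j] that insert.prems j k by blast
  with j k show ?case
    by auto
qed

lemma lattice_on_if_finite_with_sups_and_bot:
  assumes "finite A" and po: "partial_order_on' A le"
    and sups: "\<forall>x\<in>A. \<forall>y\<in>A. \<exists>j. is_sup_on A le x y j"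
    and bot: "b \<in> A" "\<forall>x\<in>A. le b x"
  shows "lattice_on A le"
  unfolding lattice_on_def
proof (intro conjI ballI po)
  fix x y assume xy: "x \<in> A" "y \<in> A"
  show "\<exists>j. is_sup_on A le x y j"
    using sups xy by blast
  let ?S = "{z\<in>A. le z x \<and> le z y}"
  have "finite ?S" "?S \<noteq> {}" "?S \<subseteq> A"
    using assms(1) bot xy by auto
  then obtain m where "m \<in> A" "\<forall>s\<in>?S. le s m" "\<forall>z\<in>A. (\<forall>s\<in>?S. le s z) \<longrightarrow> le m z"
    using finite_poset_ex_lub[OF po sups] by meson
  with xy have "is_inf_on A le x y m"
    unfolding is_inf_on_def by simp
  then show "\<exists>m. is_inf_on A le x y m" ..
qed

lemma covers_on_UNIV_iff:
  "covers_on UNIV (\<le>) x y \<longleftrightarrow> (x::'a::order) < y \<and> (\<forall>z. x \<le> z \<longrightarrow> z \<le> y \<longrightarrow> z = x \<or> z = y)"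
  unfolding covers_on_def by auto

lemma coatoms_iff:
  "(c::'a::bounded_lattice) \<in> coatoms \<longleftrightarrow> c \<noteq> top \<and> (\<forall>z. c \<le> z \<longrightarrow> z = c \<or> z = top)"
  unfolding coatoms_def covers_on_UNIV_iff by (auto simp: less_le)

lemma atoms_iff:
  "(a::'a::bounded_lattice) \<in> atoms \<longleftrightarrow> a \<noteq> bot \<and> (\<forall>z. z \<le> a \<longrightarrow> z = bot \<or> z = a)"
  unfolding atoms_def covers_on_UNIV_iff by (auto simp: less_le)

lemma coatom_le_imp_eq: "c \<in> coatoms \<Longrightarrow> d \<in> coatoms \<Longrightarrow> c \<le> (d::'a::bounded_lattice) \<Longrightarrow> c = d"
  unfolding coatoms_iff by blast

lemma atom_le_imp_eq: "a \<in> atoms \<Longrightarrow> b \<in> atoms \<Longrightarrow> a \<le> (b::'a::bounded_lattice) \<Longrightarrow> a = b"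
  unfolding atoms_iff by metis

lemma ex_coatom_above:
  assumes "(x::'a::{finite,bounded_lattice}) \<noteq> top"
  obtains c where "c \<in> coatoms" "x \<le> c"
proof -
  obtain m where "m \<in> {y. x \<le> y \<and> y \<noteq> top}" "\<forall>b\<in>{y. x \<le> y \<and> y \<noteq> top}. m \<le> b \<longrightarrow> m = b"
    using finite_has_maximal[of "{y. x \<le> y \<and> y \<noteq> top}"] assms by auto
  then have "m \<in> coatoms" "x \<le> m"
    unfolding coatoms_iff using order_trans by blast+
  then show thesis ..
qed

lemma ex_atom_below:
  assumes "(x::'a::{finite,bounded_lattice}) \<noteq> bot"
  obtains a where "a \<in> atoms" "a \<le> x"
proof -
  obtain m where "m \<in> {y. y \<le> x \<and> y \<noteq> bot}" "\<forall>b\<in>{y. y \<le> x \<and> y \<noteq> bot}. b \<le> m \<longrightarrow> m = b"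
    using finite_has_minimal[of "{y. y \<le> x \<and> y \<noteq> bot}"] assms by auto
  then have "m \<in> atoms" "m \<le> x"
    unfolding atoms_iff using order_trans by blast+
  then show thesis ..
qed

lemma semimodular_covers_sup:
  assumes "semimodular TYPE('a::lattice)" "s \<noteq> t"
    and "covers_on UNIV (\<le>) m s" "covers_on UNIV (\<le>) m t"
  shows "covers_on UNIV (\<le>) s (sup s (t::'a))"
proof -
  have "inf s t = m"
    using assms(2-4) unfolding covers_on_UNIV_iff
    by (metis inf.absorb_iff1 inf.cobounded1 le_inf_iff less_le)
  then have "is_inf_on UNIV (\<le>) s t m"
    unfolding is_inf_on_def by auto
  moreover have "is_sup_on UNIV (\<le>) s t (sup s t)"
    unfolding is_sup_on_def by auto
  ultimately show ?thesis
    using assms(1,3,4) unfolding semimodular_def semimodular_on_def by blast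
qed

definition vs2_up :: "('a::bounded_lattice \<Rightarrow> 'b::bounded_lattice) \<Rightarrow> 'b \<Rightarrow> 'a + 'b" where
  "vs2_up f u = (if u \<in> atoms then Inl (the_inv_into coatoms f u) else Inr u)"

locale vertical_2_sum =
  fixes f :: "'a::{finite,bounded_lattice} \<Rightarrow> 'b::{finite,bounded_lattice}"
  assumes semimodular_L: "semimodular TYPE('a)"
    and card_coatoms: "card (coatoms :: 'a set) = 2"
    and semimodular_U: "semimodular TYPE('b)"
    and bij_coatoms_atoms: "bij_betw f coatoms atoms"
begin

abbreviation "C \<equiv> vs2_carrier f"
abbreviation "le \<equiv> vs2_le f"
abbreviation "up \<equiv> vs2_up f"

lemma f_coatom: "c \<in> coatoms \<Longrightarrow> f c \<in> atoms"
  using bij_coatoms_atoms by (auto simp: bij_betw_def)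

lemma f_coatom_eq_iff: "c \<in> coatoms \<Longrightarrow> d \<in> coatoms \<Longrightarrow> f c = f d \<longleftrightarrow> c = d"
  using bij_coatoms_atoms by (auto simp: bij_betw_def inj_on_def)

lemma atom_obtain_coatom:
  assumes "a \<in> atoms" obtains c where "c \<in> coatoms" "a = f c"
  using assms bij_coatoms_atoms by (auto simp: bij_betw_def)

lemma f_coatom_le_iff: "c \<in> coatoms \<Longrightarrow> d \<in> coatoms \<Longrightarrow> f c \<le> f d \<longleftrightarrow> c = d"
  using f_coatom f_coatom_eq_iff atom_le_imp_eq by blast

lemma coatom_eq_one_of:
  assumes "c \<in> coatoms" "d \<in> coatoms" "c \<noteq> d" "e \<in> (coatoms :: 'a set)"
  shows "e = c \<or> e = d"
proof -
  obtain a b where ab: "(coatoms :: 'a set) = {a, b}"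
    using card_coatoms unfolding card_2_iff by blast
  show ?thesis
    using assms unfolding ab by blast
qed

lemma coatom_ne_top: "c \<in> coatoms \<Longrightarrow> c \<noteq> top"
  unfolding coatoms_iff by blast

lemma L_bot_ne_top: "(bot::'a) \<noteq> top"
proof
  assume "(bot::'a) = top"
  moreover obtain c where "c \<in> (coatoms::'a set)"
    using card_coatoms card_2_iff by fastforce
  ultimately show False
    using coatom_ne_top by (metis bot_unique top_greatest)
qed

lemma Inl_in_C [simp]: "Inl x \<in> C \<longleftrightarrow> x \<noteq> top"
  unfolding vs2_carrier_def by auto

lemma Inr_in_C [simp]: "Inr u \<in> C \<longleftrightarrow> u \<noteq> bot \<and> u \<notin> atoms"
  unfolding vs2_carrier_def by auto

lemma Inl_le_Inl [simp]: "le (Inl x) (Inl y) \<longleftrightarrow> x \<le> y"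
  unfolding vs2_le_def vs_L_def vs_U_def
  using f_coatom_le_iff coatom_le_imp_eq by auto

lemma Inl_le_Inr [simp]: "le (Inl x) (Inr v) \<longleftrightarrow> (\<exists>c\<in>coatoms. x \<le> c \<and> f c \<le> v)"
  unfolding vs2_le_def vs_L_def vs_U_def by auto

lemma Inr_le_Inr [simp]: "le (Inr u) (Inr v) \<longleftrightarrow> u \<le> v"
  unfolding vs2_le_def vs_L_def vs_U_def by auto

lemma Inr_le_Inl [simp]: "Inr u \<in> C \<Longrightarrow> \<not> le (Inr u) (Inl y)"
  unfolding vs2_le_def vs_L_def vs_U_def using f_coatom atoms_iff by auto

lemma partial_order_vs2: "partial_order_on' C le"
  unfolding partial_order_on'_def
proof (intro conjI ballI impI)
  fix p assume "p \<in> C"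
  then show "le p p" by (cases p) auto
next
  fix p q assume "p \<in> C" "q \<in> C" "le p q \<and> le q p"
  then show "p = q" by (cases p; cases q) auto
next
  fix p q r assume "p \<in> C" "q \<in> C" "r \<in> C" "le p q \<and> le q r"
  then show "le p r" by (cases p; cases q; cases r) (auto intro: order_trans)
qed

lemma vs2_up_f [simp]: "c \<in> coatoms \<Longrightarrow> up (f c) = Inl c"
  using bij_coatoms_atoms f_coatom
  by (simp add: vs2_up_def bij_betw_def the_inv_into_f_f)

lemma vs2_up_non_atom [simp]: "u \<notin> atoms \<Longrightarrow> up u = Inr u"
  by (simp add: vs2_up_def)

lemma vs2_up_in_C: "u \<noteq> bot \<Longrightarrow> up u \<in> C"
  by (cases "u \<in> atoms") (auto elim: atom_obtain_coatom simp: coatom_ne_top)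

lemma Inl_le_vs2_up_iff:
  assumes "w \<noteq> bot"
  shows "le (Inl x) (up w) \<longleftrightarrow> (\<exists>c\<in>coatoms. x \<le> c \<and> f c \<le> w)"
proof (cases "w \<in> atoms")
  case True
  then obtain d where "d \<in> coatoms" "w = f d"
    by (rule atom_obtain_coatom)
  then show ?thesis
    using f_coatom_le_iff by auto
qed simp

lemma vs2_up_le_vs2_up_iff:
  assumes "u \<noteq> bot" "v \<noteq> bot"
  shows "le (up u) (up v) \<longleftrightarrow> u \<le> v"
proof (cases "u \<in> atoms")
  case True
  then obtain c where "c \<in> coatoms" "u = f c"
    by (rule atom_obtain_coatom)
  then show ?thesis
    using Inl_le_vs2_up_iff[OF assms(2)] by (auto dest: coatom_le_imp_eq)
next
  case False
  then show ?thesis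
    using assms f_coatom atoms_iff
    by (cases "v \<in> atoms") (auto elim!: atom_obtain_coatom)
qed

lemma inj_on_vs2_up: "inj_on up (UNIV - {bot})"
  by (rule inj_onI) (metis vs2_up_le_vs2_up_iff order.eq_iff Diff_iff singletonI)

lemma vs2_up_upset:
  assumes "u \<noteq> bot" "p \<in> C" "le (up u) p"
  shows "p \<in> up ` (UNIV - {bot})"
proof (cases p)
  case (Inl y)
  show ?thesis
  proof (cases "u \<in> atoms")
    case True
    then obtain c where c: "c \<in> coatoms" "u = f c"
      by (rule atom_obtain_coatom)
    with assms Inl have "y = c"
      by (auto simp: coatoms_iff)
    with c Inl show ?thesis
      using f_coatom atoms_iff by (auto intro!: image_eqI[of _ _ "f c"])
  next
    case False
    with assms Inl show ?thesis
      by simp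
  qed
next
  case (Inr w)
  with assms show ?thesis
    by (auto intro!: image_eqI[of _ _ w])
qed

lemma vs2_carrier_cases:
  assumes "p \<in> C"
  obtains (lower) x where "p = Inl x" "x \<noteq> top" "x \<notin> coatoms"
    | (upper) u where "p = up u" "u \<noteq> bot"
proof (cases p)
  case (Inl x)
  show thesis
  proof (cases "x \<in> coatoms")
    case True
    then have "p = up (f x)" "f x \<noteq> bot"
      using Inl f_coatom atoms_iff by auto
    then show thesis
      by (rule upper)
  next
    case False
    with Inl assms show thesis
      using lower by simp
  qed
next
  case (Inr u)
  with assms show thesis
    using upper[of u] by simp
qed

lemma is_sup_vs2_up:
  assumes "u \<noteq> bot" "v \<noteq> bot"
  shows "is_sup_on C le (up u) (up v) (up (sup u v))"
proof (rule is_sup_on_upset_embedding[where B = "UNIV - {bot}" and le = "(\<le>)"])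
  show "up ` (UNIV - {bot}) \<subseteq> C"
    using vs2_up_in_C by blast
  show "\<forall>a\<in>UNIV - {bot}. \<forall>b\<in>UNIV - {bot}. le (up a) (up b) \<longleftrightarrow> a \<le> b"
    using vs2_up_le_vs2_up_iff by blast
  show "\<forall>b\<in>UNIV - {bot}. \<forall>z\<in>C. le (up b) z \<longrightarrow> z \<in> up ` (UNIV - {bot})"
    using vs2_up_upset by blast
  show "is_sup_on (UNIV - {bot}) (\<le>) u v (sup u v)"
    using assms unfolding is_sup_on_def by (auto simp: bot_unique)
qed (use assms in auto)

lemma is_sup_Inl_Inl:
  assumes "sup x y \<noteq> top"
  shows "is_sup_on C le (Inl x) (Inl y) (Inl (sup x y))"
  unfolding is_sup_on_def
proof (intro conjI ballI impI)
  fix z assume "z \<in> C" and z: "le (Inl x) z \<and> le (Inl y) z"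
  then show "le (Inl (sup x y)) z"
  proof (cases z rule: vs2_carrier_cases)
    case (upper w)
    with z obtain c d where cd: "c \<in> coatoms" "x \<le> c" "f c \<le> w" "d \<in> coatoms" "y \<le> d" "f d \<le> w"
      using Inl_le_vs2_up_iff by auto
    obtain e where e: "e \<in> coatoms" "sup x y \<le> e"
      using assms by (rule ex_coatom_above)
    have "\<exists>c'\<in>coatoms. sup x y \<le> c' \<and> f c' \<le> w"
    proof (cases "c = d")
      case False
      then have "e = c \<or> e = d"
        using cd e coatom_eq_one_of by blast
      with cd e show ?thesis
        by auto
    qed (use cd in auto)
    with upper show ?thesis
      using Inl_le_vs2_up_iff by simp
  qed (use z in simp)
qed (use assms in simp_all)

lemma is_sup_Inl_Inl_top:
  assumes "c \<in> coatoms" "d \<in> coatoms" "x \<le> c" "y \<le> d" "sup x y = top"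
  shows "is_sup_on C le (Inl x) (Inl y) (up (sup (f c) (f d)))"
  unfolding is_sup_on_def
proof (intro conjI ballI impI)
  have ne_bot: "sup (f c) (f d) \<noteq> bot"
    using assms(1) f_coatom atoms_iff by auto
  then show "up (sup (f c) (f d)) \<in> C"
    by (rule vs2_up_in_C)
  show "le (Inl x) (up (sup (f c) (f d)))" "le (Inl y) (up (sup (f c) (f d)))"
    using assms ne_bot Inl_le_vs2_up_iff by auto
  fix z assume "z \<in> C" and z: "le (Inl x) z \<and> le (Inl y) z"
  then show "le (up (sup (f c) (f d))) z"
  proof (cases z rule: vs2_carrier_cases)
    case (lower w)
    with z assms(5) show ?thesis
      by (metis Inl_le_Inl le_sup_iff top_unique)
  next
    case (upper w)
    with z obtain c' d' where cd': "c' \<in> coatoms" "x \<le> c'" "f c' \<le> w" "d' \<in> coatoms" "y \<le> d'" "f d' \<le> w"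
      using Inl_le_vs2_up_iff by auto
    have "c' \<noteq> d'"
      using cd' assms(5) coatom_ne_top by (metis le_sup_iff top_unique)
    then have "c = c' \<or> c = d'" "d = c' \<or> d = d'"
      using cd' assms(1,2) coatom_eq_one_of by blast+
    with cd' have "sup (f c) (f d) \<le> w"
      by auto
    with upper ne_bot show ?thesis
      using vs2_up_le_vs2_up_iff by simp
  qed
qed

lemma ex_sup_Inl_vs2_up:
  assumes "x \<noteq> top" "v \<noteq> bot"
  shows "\<exists>j. is_sup_on C le (Inl x) (up v) j"
proof (cases "\<exists>c\<in>coatoms. x \<le> c \<and> f c \<le> v")
  case True
  have "is_sup_on C le (Inl x) (up v) (up v)"
    unfolding is_sup_on_def
    using True assms Inl_le_vs2_up_iff vs2_up_in_C vs2_up_le_vs2_up_iff by auto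
  then show ?thesis ..
next
  case False
  obtain c where c: "c \<in> coatoms" "x \<le> c"
    using assms(1) by (rule ex_coatom_above)
  \<comment> \<open>\<open>v\<close> lies above some \<open>f c3\<close>, and \<open>x \<le> c3\<close> fails; so the other coatom is \<open>c3\<close>.\<close>
  have only_c: "c' = c" if "c' \<in> coatoms" "x \<le> c'" for c'
  proof (rule ccontr)
    assume "c' \<noteq> c"
    obtain a where "a \<in> atoms" "a \<le> v"
      using assms(2) by (rule ex_atom_below)
    then obtain c3 where "c3 \<in> coatoms" "f c3 \<le> v"
      by (auto elim: atom_obtain_coatom)
    with \<open>c' \<noteq> c\<close> c that False show False
      using coatom_eq_one_of by blast
  qed
  have ne_bot: "sup (f c) v \<noteq> bot"
    using assms(2) by (simp add: bot_unique)
  have "is_sup_on C le (Inl x) (up v) (up (sup (f c) v))"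
    unfolding is_sup_on_def
  proof (intro conjI ballI impI)
    fix z assume "z \<in> C" and z: "le (Inl x) z \<and> le (up v) z"
    then obtain w where w: "z = up w" "w \<noteq> bot"
      using assms(2) vs2_up_upset by blast
    with z obtain c' where "c' \<in> coatoms" "x \<le> c'" "f c' \<le> w" "v \<le> w"
      using assms(2) Inl_le_vs2_up_iff vs2_up_le_vs2_up_iff by auto
    with only_c have "sup (f c) v \<le> w"
      by auto
    with w ne_bot show "le (up (sup (f c) v)) z"
      using vs2_up_le_vs2_up_iff by simp
  qed (use assms c ne_bot vs2_up_in_C Inl_le_vs2_up_iff vs2_up_le_vs2_up_iff in auto)
  then show ?thesis ..
qed

lemma ex_sup_vs2:
  assumes "p \<in> C" "q \<in> C"
  shows "\<exists>j. is_sup_on C le p q j"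
  using assms(1)
proof (cases rule: vs2_carrier_cases)
  case (lower x)
  show ?thesis
    using assms(2)
  proof (cases rule: vs2_carrier_cases)
    case (lower y)
    show ?thesis
    proof (cases "sup x y = top")
      case True
      obtain c d where "c \<in> coatoms" "x \<le> c" "d \<in> coatoms" "y \<le> d"
        using \<open>x \<noteq> top\<close> \<open>y \<noteq> top\<close> by (metis ex_coatom_above)
      with True \<open>p = Inl x\<close> lower show ?thesis
        using is_sup_Inl_Inl_top by blast
    next
      case False
      with \<open>p = Inl x\<close> lower show ?thesis
        using is_sup_Inl_Inl by blast
    qed
  next
    case (upper v)
    with \<open>p = Inl x\<close> \<open>x \<noteq> top\<close> show ?thesis
      using ex_sup_Inl_vs2_up by simp
  qed
next
  case (upper u)
  show ?thesis
    using assms(2)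
  proof (cases rule: vs2_carrier_cases)
    case (lower y)
    with \<open>p = up u\<close> \<open>u \<noteq> bot\<close> show ?thesis
      using ex_sup_Inl_vs2_up is_sup_on_commute by metis
  next
    case (upper v)
    with \<open>p = up u\<close> \<open>u \<noteq> bot\<close> show ?thesis
      using is_sup_vs2_up by blast
  qed
qed

lemma Inl_bot_le:
  assumes "p \<in> C"
  shows "le (Inl bot) p"
  using assms
proof (cases rule: vs2_carrier_cases)
  case (upper u)
  obtain a where "a \<in> atoms" "a \<le> u"
    using \<open>u \<noteq> bot\<close> by (rule ex_atom_below)
  then obtain c where "c \<in> coatoms" "f c \<le> u"
    by (auto elim: atom_obtain_coatom)
  with upper show ?thesis
    using Inl_le_vs2_up_iff by auto
qed simp_all

lemma lattice_vs2: "lattice_on C le"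
proof (rule lattice_on_if_finite_with_sups_and_bot)
  show "finite C"
    by simp
  show "Inl bot \<in> C"
    using L_bot_ne_top by simp
qed (use partial_order_vs2 ex_sup_vs2 Inl_bot_le in auto)


lemma covers_Inl_Inl_iff:
  assumes "x \<noteq> top" "y \<noteq> top"
  shows "covers_on C le (Inl x) (Inl y) \<longleftrightarrow> covers_on UNIV (\<le>) x y"
proof -
  have "covers_on C le (Inl x) (Inl y) \<longleftrightarrow> covers_on (UNIV - {top}) (\<le>) x y"
  proof (rule covers_on_embedding_iff)
    show "\<forall>z\<in>C. le (Inl x) z \<and> le z (Inl y) \<longrightarrow> z \<in> Inl ` (UNIV - {top})"
    proof (intro ballI impI)
      fix z assume "z \<in> C" "le (Inl x) z \<and> le z (Inl y)"
      then show "z \<in> Inl ` (UNIV - {top})"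
        by (cases z) auto
    qed
  qed (use assms in auto)
  also have "\<dots> \<longleftrightarrow> covers_on UNIV (\<le>) x y"
    using assms by (intro covers_on_subset_iff[symmetric]) (auto simp: top_unique)
  finally show ?thesis .
qed

lemma covers_vs2_up_iff:
  assumes "u \<noteq> bot" "v \<noteq> bot"
  shows "covers_on C le (up u) (up v) \<longleftrightarrow> covers_on UNIV (\<le>) u v"
proof -
  have "covers_on C le (up u) (up v) \<longleftrightarrow> covers_on (UNIV - {bot}) (\<le>) u v"
    using assms inj_on_vs2_up vs2_up_in_C vs2_up_le_vs2_up_iff vs2_up_upset
    by (intro covers_on_embedding_iff) auto
  also have "\<dots> \<longleftrightarrow> covers_on UNIV (\<le>) u v"
    using assms by (intro covers_on_subset_iff[symmetric]) (auto simp: bot_unique)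
  finally show ?thesis .
qed

lemma covers_from_non_coatom:
  assumes "x \<notin> coatoms" and cov: "covers_on C le (Inl x) q"
  obtains y where "q = Inl y" "y \<noteq> top"
proof (cases q)
  case (Inl y)
  with cov show thesis
    using that unfolding covers_on_def by simp
next
  case (Inr v)
  with cov have "le (Inl x) (Inr v)"
    unfolding covers_on_def by blast
  then obtain c where c: "c \<in> coatoms" "x \<le> c" "f c \<le> v"
    by auto
  then have "Inl c \<in> C" "le (Inl x) (Inl c)" "le (Inl c) (Inr v)"
    using coatom_ne_top by auto
  then have "Inl c = Inl x \<or> Inl c = Inr v"
    using covers_onD[of C le "Inl x" "Inr v" "Inl c"] cov Inr by blast
  with assms(1) c(1) show thesis
    by auto
qed

lemma covers_sup_vs2_up:
  assumes "s \<noteq> bot" "t \<noteq> bot" "s \<noteq> t"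
    and "covers_on UNIV (\<le>) w s" "covers_on UNIV (\<le>) w t"
    and "is_sup_on C le (up s) (up t) j"
  shows "covers_on C le (up s) j"
proof -
  have "j = up (sup s t)"
    using is_sup_on_unique[OF partial_order_vs2 assms(6) is_sup_vs2_up[OF assms(1,2)]] .
  moreover have "covers_on UNIV (\<le>) s (sup s t)"
    using semimodular_covers_sup[OF semimodular_U assms(3-5)] .
  ultimately show ?thesis
    using assms(1) covers_vs2_up_iff by (simp add: bot_unique)
qed

lemma covers_sup_Inl:
  assumes "s \<noteq> top" "t \<noteq> top" "s \<noteq> t"
    and "covers_on UNIV (\<le>) x s" "covers_on UNIV (\<le>) x t"
    and "is_sup_on C le (Inl s) (Inl t) j"
  shows "covers_on C le (Inl s) j"
proof -
  have s_sup: "covers_on UNIV (\<le>) s (sup s t)"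
    using semimodular_covers_sup[OF semimodular_L assms(3-5)] .
  show ?thesis
  proof (cases "sup s t = top")
    case False
    have "j = Inl (sup s t)"
      using is_sup_on_unique[OF partial_order_vs2 assms(6) is_sup_Inl_Inl[OF False]] .
    with False assms(1) s_sup show ?thesis
      using covers_Inl_Inl_iff by simp
  next
    case True
    have "covers_on UNIV (\<le>) t (sup s t)"
      using semimodular_covers_sup[OF semimodular_L assms(3)[symmetric] assms(5,4)]
      by (simp add: sup_commute)
    with True s_sup have coatoms: "s \<in> coatoms" "t \<in> coatoms"
      unfolding coatoms_def by simp_all
    then have "f s \<in> atoms" "f t \<in> atoms" "f s \<noteq> f t"
      using f_coatom f_coatom_eq_iff assms(3) by auto
    then have "covers_on UNIV (\<le>) bot (f s)" "covers_on UNIV (\<le>) bot (f t)"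
      "f s \<noteq> f t" "f s \<noteq> bot" "f t \<noteq> bot"
      unfolding atoms_def covers_on_def by auto
    moreover have "Inl s = up (f s)" "Inl t = up (f t)"
      using coatoms by simp_all
    ultimately show ?thesis
      using covers_sup_vs2_up[of "f s" "f t" bot j] assms(6) by simp
  qed
qed

lemma covers_sup_vs2:
  assumes "s \<noteq> t" "covers_on C le m s" "covers_on C le m t" "is_sup_on C le s t j"
  shows "covers_on C le s j"
proof -
  have "m \<in> C"
    using assms(2) unfolding covers_on_def by blast
  then show ?thesis
  proof (cases rule: vs2_carrier_cases)
    case (upper u)
    then obtain s' t' where s't': "s = up s'" "t = up t'" "s' \<noteq> bot" "t' \<noteq> bot"
      using assms(2,3) vs2_up_upset unfolding covers_on_def by blast
    with upper assms(2,3) have "covers_on UNIV (\<le>) u s'" "covers_on UNIV (\<le>) u t'"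
      using covers_vs2_up_iff by auto
    moreover have "s' \<noteq> t'"
      using assms(1) s't' by auto
    ultimately show ?thesis
      using covers_sup_vs2_up s't' assms(4) by blast
  next
    case (lower x)
    from assms(2,3) lower have "covers_on C le (Inl x) s" "covers_on C le (Inl x) t"
      by simp_all
    then obtain s' t' where s't': "s = Inl s'" "t = Inl t'" "s' \<noteq> top" "t' \<noteq> top"
      by (elim covers_from_non_coatom[OF \<open>x \<notin> coatoms\<close>]) simp
    with lower assms have "covers_on UNIV (\<le>) x s'" "covers_on UNIV (\<le>) x t'" "s' \<noteq> t'"
      using covers_Inl_Inl_iff by auto
    with s't' assms(4) show ?thesis
      using covers_sup_Inl by blast
  qed
qed

lemma semimodular_vs2: "semimodular_on C le"
  unfolding semimodular_on_def
proof (intro ballI allI impI conjI)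
  fix s t m j
  assume "s \<in> C" "t \<in> C"
    and h: "is_inf_on C le s t m \<and> is_sup_on C le s t j \<and> covers_on C le m s \<and> covers_on C le m t"
  have "s \<noteq> t"
  proof
    assume "s = t"
    moreover have "le s s"
      using partial_order_vs2 \<open>s \<in> C\<close> unfolding partial_order_on'_def by blast
    ultimately have "le s m" "le m s" "m \<in> C"
      using h \<open>s \<in> C\<close> unfolding is_inf_on_def by auto
    with \<open>s \<in> C\<close> have "m = s"
      using partial_order_vs2 unfolding partial_order_on'_def by blast
    with h show False
      unfolding covers_on_def by blast
  qed
  with h show "covers_on C le s j" "covers_on C le t j"
    using covers_sup_vs2[of s t m j] covers_sup_vs2[of t s m j] is_sup_on_commute[of C le s t j]
    by auto
qed

end

theorem lemma3p5:
  fixes f :: "'a::{finite,bounded_lattice} \<Rightarrow> 'b::{finite,bounded_lattice}"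
  assumes "semimodular TYPE('a)"
    and "card (coatoms :: 'a set) = 2"
    and "semimodular TYPE('b)"
    and "card (atoms :: 'b set) = 2"
    and "bij_betw f coatoms atoms"
  shows "lattice_on (vs2_carrier f) (vs2_le f) \<and> semimodular_on (vs2_carrier f) (vs2_le f)"
proof -
  \<comment> \<open>The hypothesis on the atoms of \<open>U\<close> is implied by the bijection.\<close>
  interpret vertical_2_sum f
    using assms(1-3,5) by unfold_locales
  show ?thesis
    using lattice_vs2 semimodular_vs2 ..
qed

end
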